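(* Let $f_1,f_2,f_3$ be smooth nowhere-vanishing functions on $\mathbb R^3$, $g=\frac{1}{f_1^2}dx^1\otimes dx^1+\frac{1}{f_2^2}dx^2\otimes dx^2+\frac{1}{f_3^2}dx^3\otimes dx^3$, $E_i=f_i\frac{\partial}{\partial x^i}$, and let $V_1=\sum_{i=1}^3V_1^iE_i$, $V_2=\sum_{i=1}^3V_2^iE_i$ with smooth components. (i) If $f_i$ and $V_k^i$ depend only on $x^1$ for all $i\in\{1,2,3\}$, $k\in\{1,2\}$, and $V_1,V_2$ are Killing vector fields, then $V_1^1=V_2^1+\tilde c_1$ and $V_1^i=V_2^i+\tilde c_i+\frac{c_i}{f_i}$ for $i\in\{2,3\}$, for some constants $c_2,c_3,\tilde c_1,\tilde c_2,\tilde c_3\in\mathbb R$. (ii) If $f_i$ and $V_k^i$ depend only on $x^i$ for all $i\in\{1,2,3\}$, $k\in\{1,2\}$, and $V_1,V_2$ are Killing vector fields, then $V_1^i=V_2^i+c_i$ for some constants $c_i\in\mathbb R$, $i\in\{1,2,3\}$.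
   Context: $x^1,x^2,x^3$ are the standard coordinates on $\mathbb R^3$. A vector field $V$ is Killing if $\mathcal L_Vg=0$. *)

theory Defs
  imports "HOL-Analysis.Analysis"
begin

text \<open>Functions on R^3 are modelled as real^3 => real; coordinate x^i is x $ i, i :: 3.\<close>

definition pd :: "3 \<Rightarrow> (real^3 \<Rightarrow> real) \<Rightarrow> real^3 \<Rightarrow> real" where
  "pd k F x = deriv (\<lambda>t. F (x + t *\<^sub>R axis k 1)) 0"

fun iter_pd :: "3 list \<Rightarrow> (real^3 \<Rightarrow> real) \<Rightarrow> real^3 \<Rightarrow> real" where
  "iter_pd [] F = F"
| "iter_pd (k # ks) F = pd k (iter_pd ks F)"

definition smooth3 :: "(real^3 \<Rightarrow> real) \<Rightarrow> bool" where
  "smooth3 F \<longleftrightarrow> (\<forall>ks. continuous_on UNIV (iter_pd ks F) \<and>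
      (\<forall>k x. (\<lambda>t. iter_pd ks F (x + t *\<^sub>R axis k 1)) differentiable (at 0)))"

text \<open>Lie derivative of a (0,2)-tensor with coordinate components g i j along the vector
  field with coordinate components W k (i.e. W = sum_k W^k d/dx^k), in coordinates.\<close>
definition lie_metric ::
  "(3 \<Rightarrow> 3 \<Rightarrow> real^3 \<Rightarrow> real) \<Rightarrow> (3 \<Rightarrow> real^3 \<Rightarrow> real) \<Rightarrow> 3 \<Rightarrow> 3 \<Rightarrow> real^3 \<Rightarrow> real" where
  "lie_metric g W i j x =
     (\<Sum>k\<in>UNIV. W k x * pd k (g i j) x)
   + (\<Sum>k\<in>UNIV. g k j x * pd i (W k) x)
   + (\<Sum>k\<in>UNIV. g i k x * pd j (W k) x)"

definition killing :: "(3 \<Rightarrow> 3 \<Rightarrow> real^3 \<Rightarrow> real) \<Rightarrow> (3 \<Rightarrow> real^3 \<Rightarrow> real) \<Rightarrow> bool" where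
  "killing g W \<longleftrightarrow> (\<forall>i j x. lie_metric g W i j x = 0)"

definition diag_metric :: "(3 \<Rightarrow> real^3 \<Rightarrow> real) \<Rightarrow> 3 \<Rightarrow> 3 \<Rightarrow> real^3 \<Rightarrow> real" where
  "diag_metric f i j x = (if i = j then 1 / (f i x)\<^sup>2 else 0)"

text \<open>Coordinate components of V = sum_i V^i E_i with E_i = f_i d/dx^i.\<close>
definition frame_field :: "(3 \<Rightarrow> real^3 \<Rightarrow> real) \<Rightarrow> (3 \<Rightarrow> real^3 \<Rightarrow> real) \<Rightarrow> 3 \<Rightarrow> real^3 \<Rightarrow> real" where
  "frame_field f V i x = V i x * f i x"

definition depends_only_on :: "3 \<Rightarrow> (real^3 \<Rightarrow> real) \<Rightarrow> bool" where
  "depends_only_on k F \<longleftrightarrow> (\<forall>x y. x $ k = y $ k \<longrightarrow> F x = F y)"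

end

theory Submission
  imports Defs
begin

(* In the coordinate frame the metric is diagonal, so the Killing equations decouple.
   The diagonal equation (i,i) reads 2 d_i(V^i) / f_i = 0 as soon as f_i depends only on x^i,
   so V^i is constant whenever it also depends only on x^i.  The off-diagonal equation (k,j)
   reads d_k(V^j f_j) / f_j^2 + d_j(V^k f_k) / f_k^2 = 0; if everything depends only on x^k,
   the second term vanishes and V^j f_j is constant.  Hence in case (ii) every V_k^i is
   constant, and in case (i) V_k^1 and V_k^j f_j (j = 2, 3) are constant; in particular the
   constants ct_2, ct_3 can be taken to be 0. *)

lemma smooth3_differentiable_along_axis:
  "smooth3 F \<Longrightarrow> (\<lambda>t. F (x + t *\<^sub>R axis k 1)) differentiable (at 0)"
  using iter_pd.simps(1) unfolding smooth3_def by metis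

lemma has_real_derivative_pd:
  "(\<lambda>t. F (x + t *\<^sub>R axis k 1)) differentiable (at 0) \<Longrightarrow>
   ((\<lambda>t. F (x + t *\<^sub>R axis k 1)) has_real_derivative pd k F x) (at 0)"
  unfolding pd_def using DERIV_deriv_iff_real_differentiable by blast

lemma pd_eq_0_if_depends_only_on:
  assumes "depends_only_on k F" "j \<noteq> k"
  shows "pd j F x = 0"
proof -
  have "(x + t *\<^sub>R axis j 1) $ k = x $ k" for t
    using assms(2) by (simp add: axis_def)
  then have "(\<lambda>t. F (x + t *\<^sub>R axis j 1)) = (\<lambda>t. F x)"
    using assms(1) unfolding depends_only_on_def by metis
  then show ?thesis unfolding pd_def by simp
qed

lemma pd_mult:
  assumes "(\<lambda>t. F (x + t *\<^sub>R axis k 1)) differentiable (at 0)"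
    and "(\<lambda>t. G (x + t *\<^sub>R axis k 1)) differentiable (at 0)"
  shows "pd k (\<lambda>y. F y * G y) x = pd k F x * G x + F x * pd k G x"
  unfolding pd_def [of k "\<lambda>y. F y * G y"]
  using DERIV_mult [OF assms [THEN has_real_derivative_pd]]
  by (intro DERIV_imp_deriv) (simp add: mult.commute)

lemma pd_inverse_square:
  assumes "(\<lambda>t. F (x + t *\<^sub>R axis k 1)) differentiable (at 0)" and "F x \<noteq> 0"
  shows "pd k (\<lambda>y. 1 / (F y)\<^sup>2) x = - 2 * pd k F x / (F x) ^ 3"
proof -
  have "((\<lambda>t. inverse ((F (x + t *\<^sub>R axis k 1))\<^sup>2)) has_real_derivative
      - (2 * pd k F x * F x * inverse ((F x)\<^sup>2 * (F x)\<^sup>2))) (at 0)"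
    using DERIV_inverse_fun [OF DERIV_power [OF has_real_derivative_pd [OF assms(1)], of 2]] assms(2)
    by (simp add: mult.assoc power2_eq_square)
  moreover have "- (2 * pd k F x * F x * inverse ((F x)\<^sup>2 * (F x)\<^sup>2)) = - 2 * pd k F x / (F x) ^ 3"
    using assms(2) by (simp add: field_simps power2_eq_square power3_eq_cube)
  ultimately show ?thesis
    unfolding pd_def by (intro DERIV_imp_deriv) (simp add: inverse_eq_divide)
qed

lemma depends_only_on_const_if_pd_eq_0:
  assumes dep: "depends_only_on k F"
    and diff: "\<And>y. (\<lambda>t. F (y + t *\<^sub>R axis k 1)) differentiable (at 0)"
    and pd0: "\<And>y. pd k F y = 0"
  shows "F x = F y"
proof -
  define g where "g t = F (x + t *\<^sub>R axis k 1)" for t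
  have "DERIV g s :> 0" for s
  proof -
    have "(\<lambda>t. F ((x + s *\<^sub>R axis k 1) + t *\<^sub>R axis k 1)) = (\<lambda>t. g (t + s))"
      unfolding g_def by (simp add: algebra_simps)
    then have "((\<lambda>t. g (t + s)) has_real_derivative 0) (at 0)"
      using has_real_derivative_pd [OF diff [of "x + s *\<^sub>R axis k 1"]] pd0 by simp
    then show ?thesis using DERIV_shift [of g 0 0 s] by simp
  qed
  then have "g 0 = g (y $ k - x $ k)" by (metis DERIV_isconst_all)
  moreover have "(x + (y $ k - x $ k) *\<^sub>R axis k 1) $ k = y $ k" by (simp add: axis_def)
  ultimately show ?thesis
    using dep unfolding g_def depends_only_on_def by (metis scale_zero_left add.right_neutral)
qed

lemma depends_only_on_mult:
  "depends_only_on k F \<Longrightarrow> depends_only_on k G \<Longrightarrow> depends_only_on k (\<lambda>y. F y * G y)"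
  unfolding depends_only_on_def by metis

lemma depends_only_on_inverse_square:
  "depends_only_on k F \<Longrightarrow> depends_only_on k (\<lambda>y. 1 / (F y)\<^sup>2)"
  unfolding depends_only_on_def by metis

lemma sum_UNIV_eq_single:
  assumes "\<And>k. k \<noteq> i \<Longrightarrow> h k = 0"
  shows "sum h (UNIV :: 'a :: finite set) = h i"
proof -
  have "sum h UNIV = sum h {i}" using assms by (intro sum.mono_neutral_right) auto
  then show ?thesis by simp
qed

lemma sum_diag_metric_left:
  "(\<Sum>k\<in>UNIV. diag_metric f k j x * (a k :: real)) = a j / (f j x)\<^sup>2"
  by (subst sum_UNIV_eq_single [of j]) (auto simp: diag_metric_def)

lemma sum_diag_metric_right:
  "(\<Sum>k\<in>UNIV. diag_metric f i k x * (a k :: real)) = a i / (f i x)\<^sup>2"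
  by (subst sum_UNIV_eq_single [of i]) (auto simp: diag_metric_def)

lemma lie_metric_diag_metric_off_diagonal:
  assumes "i \<noteq> j"
  shows "lie_metric (diag_metric f) W i j x = pd i (W j) x / (f j x)\<^sup>2 + pd j (W i) x / (f i x)\<^sup>2"
proof -
  have "diag_metric f i j = (\<lambda>y. 0)" using assms by (simp add: diag_metric_def fun_eq_iff)
  then have "(\<Sum>k\<in>UNIV. W k x * pd k (diag_metric f i j) x) = 0" by (simp add: pd_def)
  then show ?thesis unfolding lie_metric_def sum_diag_metric_left sum_diag_metric_right by simp
qed

lemma lie_metric_diag_metric_frame_field_diagonal:
  assumes f_diff: "(\<lambda>t. f i (x + t *\<^sub>R axis i 1)) differentiable (at 0)"
    and V_diff: "(\<lambda>t. V i (x + t *\<^sub>R axis i 1)) differentiable (at 0)"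
    and f_nz: "f i x \<noteq> 0" and f_dep: "depends_only_on i (f i)"
  shows "lie_metric (diag_metric f) (frame_field f V) i i x = 2 * pd i (V i) x / f i x"
proof -
  have g_ii: "diag_metric f i i = (\<lambda>y. 1 / (f i y)\<^sup>2)" by (simp add: diag_metric_def fun_eq_iff)
  have "(\<Sum>k\<in>UNIV. frame_field f V k x * pd k (diag_metric f i i) x)
      = V i x * f i x * (- 2 * pd i (f i) x / (f i x) ^ 3)"
    unfolding g_ii
    by (subst sum_UNIV_eq_single [of i])
       (simp_all add: pd_eq_0_if_depends_only_on [OF depends_only_on_inverse_square [OF f_dep]]
         pd_inverse_square [OF f_diff f_nz] frame_field_def)
  moreover have "pd i (frame_field f V i) x = pd i (V i) x * f i x + V i x * pd i (f i) x"
    using pd_mult [OF V_diff f_diff] by (simp add: frame_field_def [abs_def])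
  ultimately show ?thesis
    unfolding lie_metric_def sum_diag_metric_left sum_diag_metric_right
    using f_nz by (simp add: field_simps power2_eq_square power3_eq_cube)
qed

lemma killing_frame_component_const:
  assumes smooth: "smooth3 (f i)" "smooth3 (V i)" and f_nz: "\<And>y. f i y \<noteq> 0"
    and dep: "depends_only_on i (f i)" "depends_only_on i (V i)"
    and K: "killing (diag_metric f) (frame_field f V)"
  shows "V i x = V i y"
proof (rule depends_only_on_const_if_pd_eq_0)
  fix z
  have "2 * pd i (V i) z / f i z = 0"
    using K lie_metric_diag_metric_frame_field_diagonal [of f i z V] smooth f_nz dep(1)
    by (simp add: killing_def smooth3_differentiable_along_axis)
  then show "pd i (V i) z = 0" using f_nz [of z] by simp
qed (use smooth dep in \<open>simp_all add: smooth3_differentiable_along_axis\<close>)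

lemma killing_frame_component_scaled_const:
  assumes jk: "j \<noteq> k" and smooth: "smooth3 (f j)" "smooth3 (V j)" and f_nz: "\<And>y. f j y \<noteq> 0"
    and dep: "depends_only_on k (f j)" "depends_only_on k (V j)"
    and dep_k: "depends_only_on k (f k)" "depends_only_on k (V k)"
    and K: "killing (diag_metric f) (frame_field f V)"
  shows "V j x * f j x = V j y * f j y"
proof (rule depends_only_on_const_if_pd_eq_0 [where F = "\<lambda>y. V j y * f j y"])
  fix z
  have "pd j (frame_field f V k) z = 0"
    using pd_eq_0_if_depends_only_on [OF depends_only_on_mult [OF dep_k(2,1)] jk]
    by (simp add: frame_field_def [abs_def])
  then have "pd k (frame_field f V j) z / (f j z)\<^sup>2 = 0"
    using K lie_metric_diag_metric_off_diagonal [of k j f "frame_field f V" z] jk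
    by (simp add: killing_def)
  then show "pd k (\<lambda>y. V j y * f j y) z = 0"
    using f_nz [of z] by (simp add: frame_field_def [abs_def])
qed (use smooth dep in \<open>simp_all add: depends_only_on_mult smooth3_differentiable_along_axis\<close>)

theorem mainTheorem9:
  fixes f V1 V2 :: "3 \<Rightarrow> real^3 \<Rightarrow> real"
  assumes f_smooth: "\<And>i. smooth3 (f i)"
    and f_nz: "\<And>i x. f i x \<noteq> 0"
    and V1_smooth: "\<And>i. smooth3 (V1 i)"
    and V2_smooth: "\<And>i. smooth3 (V2 i)"
  shows
   "(((\<forall>i. depends_only_on 1 (f i) \<and> depends_only_on 1 (V1 i) \<and> depends_only_on 1 (V2 i))
      \<and> killing (diag_metric f) (frame_field f V1) \<and> killing (diag_metric f) (frame_field f V2))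
     \<longrightarrow> (\<exists>c2 c3 ct1 ct2 ct3 :: real. \<forall>x.
            V1 1 x = V2 1 x + ct1
          \<and> V1 2 x = V2 2 x + ct2 + c2 / f 2 x
          \<and> V1 3 x = V2 3 x + ct3 + c3 / f 3 x))
  \<and> (((\<forall>i. depends_only_on i (f i) \<and> depends_only_on i (V1 i) \<and> depends_only_on i (V2 i))
      \<and> killing (diag_metric f) (frame_field f V1) \<and> killing (diag_metric f) (frame_field f V2))
     \<longrightarrow> (\<exists>c :: 3 \<Rightarrow> real. \<forall>i x. V1 i x = V2 i x + c i))"
proof (intro conjI impI; elim conjE)
  assume "\<forall>i. depends_only_on 1 (f i) \<and> depends_only_on 1 (V1 i) \<and> depends_only_on 1 (V2 i)"
    and K1: "killing (diag_metric f) (frame_field f V1)"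
    and K2: "killing (diag_metric f) (frame_field f V2)"
  then have f_dep: "\<And>i. depends_only_on 1 (f i)" and V1_dep: "\<And>i. depends_only_on 1 (V1 i)"
    and V2_dep: "\<And>i. depends_only_on 1 (V2 i)" by simp_all
  have V1_1: "V1 1 x = V2 1 x + (V1 1 0 - V2 1 0)" for x
    using killing_frame_component_const [OF f_smooth V1_smooth f_nz f_dep V1_dep K1, of x 0]
      killing_frame_component_const [OF f_smooth V2_smooth f_nz f_dep V2_dep K2, of x 0]
    by simp
  have V1_j: "V1 j x = V2 j x + 0 + (V1 j 0 - V2 j 0) * f j 0 / f j x" if "j \<noteq> 1" for j x
  proof -
    have "V1 j x * f j x = V1 j 0 * f j 0"
      by (rule killing_frame_component_scaled_const
          [OF that f_smooth V1_smooth f_nz f_dep V1_dep f_dep V1_dep K1])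
    moreover have "V2 j x * f j x = V2 j 0 * f j 0"
      by (rule killing_frame_component_scaled_const
          [OF that f_smooth V2_smooth f_nz f_dep V2_dep f_dep V2_dep K2])
    ultimately show ?thesis using f_nz [of j x] by (simp add: field_simps)
  qed
  show "\<exists>c2 c3 ct1 ct2 ct3 :: real. \<forall>x. V1 1 x = V2 1 x + ct1
      \<and> V1 2 x = V2 2 x + ct2 + c2 / f 2 x \<and> V1 3 x = V2 3 x + ct3 + c3 / f 3 x"
    by (intro exI [of _ "(V1 2 0 - V2 2 0) * f 2 0"] exI [of _ "(V1 3 0 - V2 3 0) * f 3 0"]
        exI [of _ "V1 1 0 - V2 1 0"] exI [of _ 0] exI [of _ 0] allI conjI; rule V1_1 V1_j; simp)
next
  assume dep: "\<forall>i. depends_only_on i (f i) \<and> depends_only_on i (V1 i) \<and> depends_only_on i (V2 i)"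
    and K1: "killing (diag_metric f) (frame_field f V1)"
    and K2: "killing (diag_metric f) (frame_field f V2)"
  have V1_i: "V1 i x = V2 i x + (V1 i 0 - V2 i 0)" for i x
    using killing_frame_component_const [OF f_smooth V1_smooth f_nz _ _ K1, of i x 0]
      killing_frame_component_const [OF f_smooth V2_smooth f_nz _ _ K2, of i x 0] dep
    by simp
  show "\<exists>c :: 3 \<Rightarrow> real. \<forall>i x. V1 i x = V2 i x + c i"
    by (intro exI [of _ "\<lambda>i. V1 i 0 - V2 i 0"] allI) (rule V1_i)
qed

end
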